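(* For every complex $s$ with $\Re(s)>2$, \[\sum_{k=1}^\infty (-1)^{k-1}k\,\zeta(s,k)=2^{-s}\Big\{\zeta\big(s-1,\tfrac12\big)+\tfrac12 \zeta\big(s,\tfrac12\big)-\zeta(s-1)\Big\}.\]
   Context: $\zeta(s,\alpha)=\sum_{n=0}^\infty (n+\alpha)^{-s}$ denotes the Hurwitz zeta function ($\Re(s)>1$, $\alpha>0$), and $\zeta(s)=\zeta(s,1)$ is the Riemann zeta function. *)

theory Defs
  imports "HOL-Analysis.Analysis"
begin

text \<open>Hurwitz zeta function, defined by its Dirichlet series, meant for Re s > 1 and a > 0.\<close>
definition hurwitz_zeta :: "real \<Rightarrow> complex \<Rightarrow> complex" where
  "hurwitz_zeta a s = (\<Sum>n. (of_real (real n + a)) powr (- s))"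

definition riemann_zeta :: "complex \<Rightarrow> complex" where
  "riemann_zeta s = hurwitz_zeta 1 s"

end

theory Submission
  imports Defs
begin

(* With C N = sum of (-1)^(k-1) k over 1 <= k <= N, summation by parts against
   zeta(s,k) = k^(-s) + zeta(s,k+1) turns the N-th partial sum into
   sum_(m <= N) C m * m^(-s) + C N * zeta(s,N+1).  Since |C N| <= N and
   k |zeta(s,k)| <= sum_(n >= 0) |(n+k)^(1-s)|, a tail of a convergent series when Re s > 2,
   the boundary term tends to 0.  Finally C (2n+1) = n+1 = - C (2n+2), so grouping the series
   in pairs gives (n+1) ((2n+1)^(-s) - (2n+2)^(-s)), and writing
   n+1 = (n+1/2) + 1/2 exhibits this as 2^(-s) times the n-th terms of
   zeta(s-1,1/2) + zeta(s,1/2)/2 - zeta(s-1). *)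

lemma summable_norm_hurwitz_terms:
  assumes "a > 0" "Re w > 1"
  shows "summable (\<lambda>n. norm ((of_real (real n + a) :: complex) powr (-w)))"
proof -
  have eq: "norm ((of_real (real n + a) :: complex) powr (-w)) = (real n + a) powr (- Re w)" for n
    using assms by (subst norm_powr_real_powr) auto
  have "summable (\<lambda>n. real n powr (- Re w))"
    using assms by (subst summable_real_powr_iff) auto
  moreover have "\<forall>\<^sub>F n in sequentially. norm ((real n + a) powr (- Re w)) \<le> real n powr (- Re w)"
    using eventually_gt_at_top[of "0::nat"]
    by eventually_elim (use assms in \<open>auto intro!: powr_mono2'\<close>)
  ultimately show ?thesis
    unfolding eq by (rule summable_comparison_test_ev[rotated])
qed

lemma hurwitz_zeta_sums:
  assumes "a > 0" "Re w > 1"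
  shows "(\<lambda>n. (of_real (real n + a) :: complex) powr (-w)) sums hurwitz_zeta a w"
  unfolding hurwitz_zeta_def
  by (rule summable_sums[OF summable_norm_cancel[OF summable_norm_hurwitz_terms[OF assms]]])

lemma hurwitz_zeta_shift:
  assumes "a > 0" "Re w > 1"
  shows "hurwitz_zeta a w = of_real a powr (-w) + hurwitz_zeta (a + 1) w"
proof -
  have "(\<lambda>n. (of_real (real (Suc n) + a) :: complex) powr (-w)) sums hurwitz_zeta (a + 1) w"
    using hurwitz_zeta_sums[of "a + 1" w] assms by (simp add: add_ac)
  then have "(\<lambda>n. (of_real (real n + a) :: complex) powr (-w))
      sums (hurwitz_zeta (a + 1) w + of_real a powr (-w))"
    by (subst (asm) sums_Suc_iff) simp
  with hurwitz_zeta_sums[OF assms] show ?thesis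
    by (metis add.commute sums_unique2)
qed

lemma of_real_powr_minus_diff_one:
  assumes "x > 0"
  shows "(of_real x :: complex) powr (-(w - 1)) = of_real x * of_real x powr (-w)"
proof -
  have "(of_real x :: complex) powr (-w + 1) = of_real x powr (-w) * of_real x"
    by (simp only: powr_add powr_to_1)
  then show ?thesis by (simp add: mult.commute)
qed

lemma mult_norm_hurwitz_zeta_le:
  assumes "a > 0" "Re w > 2"
  shows "a * norm (hurwitz_zeta a w)
    \<le> (\<Sum>n. norm ((of_real (real n + a) :: complex) powr (-(w - 1))))"
proof -
  let ?g = "\<lambda>n. (of_real (real n + a) :: complex) powr (-w)"
  have sg: "summable (\<lambda>n. norm (?g n))"
    using summable_norm_hurwitz_terms[of a w] assms by auto
  have "a * norm (hurwitz_zeta a w) \<le> a * (\<Sum>n. norm (?g n))"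
    unfolding hurwitz_zeta_def using assms by (intro mult_left_mono summable_norm sg) auto
  also have "\<dots> = (\<Sum>n. a * norm (?g n))"
    by (rule suminf_mult[OF sg, symmetric])
  also have "\<dots> \<le> (\<Sum>n. norm ((of_real (real n + a) :: complex) powr (-(w - 1))))"
  proof (rule suminf_le[OF _ summable_mult[OF sg] summable_norm_hurwitz_terms])
    fix n
    have "a * norm (?g n) \<le> (real n + a) * norm (?g n)"
      by (intro mult_right_mono) auto
    also have "\<dots> = norm ((of_real (real n + a) :: complex) powr (-(w - 1)))"
    proof -
      have pos: "real n + a > 0" using assms by simp
      show ?thesis
        by (simp only: of_real_powr_minus_diff_one[OF pos] norm_mult norm_of_real abs_of_pos[OF pos])
    qed
    finally show "a * norm (?g n) \<le> norm ((of_real (real n + a) :: complex) powr (-(w - 1)))" .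
  qed (use assms in auto)
  finally show ?thesis .
qed

lemma tendsto_suminf_shift_zero:
  fixes h :: "nat \<Rightarrow> 'a::real_normed_vector"
  assumes "summable h"
  shows "(\<lambda>N. \<Sum>n. h (n + N)) \<longlonglongrightarrow> 0"
proof -
  have "(\<lambda>N. suminf h - sum h {..<N}) \<longlonglongrightarrow> suminf h - suminf h"
    by (intro tendsto_diff tendsto_const summable_LIMSEQ assms)
  then show ?thesis using suminf_minus_initial_segment[OF assms] by simp
qed

lemma tendsto_of_nat_mult_hurwitz_zeta:
  assumes "Re s > 2"
  shows "(\<lambda>k. of_nat k * hurwitz_zeta (real k) s) \<longlonglongrightarrow> 0"
proof -
  define h where "h n = norm ((of_real (real n + 1) :: complex) powr (-(s - 1)))" for n
  have "summable h"
    unfolding h_def using summable_norm_hurwitz_terms[of 1 "s - 1"] assms by auto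
  have "norm (of_nat (Suc N) * hurwitz_zeta (real (Suc N)) s) \<le> (\<Sum>n. h (n + N))" for N
    using mult_norm_hurwitz_zeta_le[of "real (Suc N)" s] assms
    by (simp only: norm_mult norm_of_nat) (simp add: h_def add_ac)
  then have "(\<lambda>N. of_nat (Suc N) * hurwitz_zeta (real (Suc N)) s) \<longlonglongrightarrow> 0"
    by (intro Lim_null_comparison[OF always_eventually tendsto_suminf_shift_zero[OF \<open>summable h\<close>]])
      auto
  then show ?thesis by (rule filterlim_sequentially_Suc[THEN iffD1])
qed

lemma summation_by_parts_tail:
  fixes g f T :: "nat \<Rightarrow> 'a::comm_ring_1"
  assumes step: "\<And>k. T k = f k + T (Suc k)"
  shows "(\<Sum>k<N. g k * T k) = (\<Sum>k<N. (\<Sum>i<Suc k. g i) * f k) + (\<Sum>i<N. g i) * T N"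
proof (induction N)
  case (Suc N)
  have "(\<Sum>k<Suc N. g k * T k)
      = (\<Sum>k<N. (\<Sum>i<Suc k. g i) * f k) + ((\<Sum>i<N. g i) + g N) * T N"
    using Suc by (simp add: distrib_right)
  also have "\<dots> = (\<Sum>k<Suc N. (\<Sum>i<Suc k. g i) * f k) + (\<Sum>i<Suc N. g i) * T (Suc N)"
    by (simp add: step[of N] distrib_left)
  finally show ?case .
qed simp

lemma sum_alternating_of_nat_even:
  "(\<Sum>k<2 * n. (-1) ^ k * of_nat (Suc k) :: 'a::comm_ring_1) = - of_nat n"
proof (induction n)
  case (Suc n)
  have double_Suc: "2 * Suc n = Suc (Suc (2 * n))" by simp
  show ?case
    by (simp only: double_Suc sum.lessThan_Suc Suc.IH) simp
qed simp

lemma sum_alternating_of_nat_odd: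
  "(\<Sum>k<Suc (2 * n). (-1) ^ k * of_nat (Suc k) :: 'a::comm_ring_1) = of_nat (Suc n)"
  by (simp only: sum.lessThan_Suc sum_alternating_of_nat_even) simp

lemma norm_sum_alternating_of_nat_le:
  "norm (\<Sum>k<N. (-1) ^ k * of_nat (Suc k) :: 'a::{comm_ring_1,real_normed_algebra_1}) \<le> real N"
proof (cases "even N")
  case True
  then obtain n where "N = 2 * n" by (rule evenE)
  then show ?thesis
    by (simp only: sum_alternating_of_nat_even norm_minus_cancel norm_of_nat)
next
  case False
  then obtain n where "N = Suc (2 * n)" by (metis oddE Suc_eq_plus1)
  then show ?thesis
    by (simp only: sum_alternating_of_nat_odd norm_of_nat)
qed

lemma of_nat_mult_powr_difference_eq:
  fixes s :: complex
  shows "of_nat (Suc n) * (of_nat (2 * n + 1) powr (-s) - of_nat (2 * n + 2) powr (-s))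
    = 2 powr (-s) * (of_real (real n + 1/2) powr (-(s - 1)) + 1/2 * of_real (real n + 1/2) powr (-s)
        - of_real (real n + 1) powr (-(s - 1)))"
proof -
  have halve: "(of_nat m :: complex) powr (-s) = 2 powr (-s) * of_real (real m / 2) powr (-s)" for m
  proof -
    have "(of_nat m :: complex) = 2 * of_real (real m / 2)" by simp
    moreover have "(2 * of_real (real m / 2) :: complex) powr (-s)
        = 2 powr (-s) * of_real (real m / 2) powr (-s)"
      by (rule powr_times_real) auto
    ultimately show ?thesis by simp
  qed
  have "real (2 * n + 1) / 2 = real n + 1/2" "real (2 * n + 2) / 2 = real n + 1" by simp_all
  then show ?thesis
    by (simp only: halve of_real_powr_minus_diff_one) (simp add: algebra_simps)
qed

lemma sums_alternating_weighted_powr: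
  assumes "Re s > 2"
  shows "(\<lambda>j. (\<Sum>i<Suc j. (-1) ^ i * of_nat (Suc i)) * (of_nat (Suc j) :: complex) powr (-s))
    sums (2 powr (-s) * (hurwitz_zeta (1/2) (s - 1) + 1/2 * hurwitz_zeta (1/2) s - riemann_zeta (s - 1)))"
    (is "?b sums ?rhs")
proof -
  have "norm (?b j) \<le> norm ((of_real (real j + 1) :: complex) powr (-(s - 1)))" for j
  proof -
    have "norm (?b j) \<le> real (Suc j) * norm ((of_nat (Suc j) :: complex) powr (-s))"
      unfolding norm_mult by (intro mult_right_mono norm_sum_alternating_of_nat_le) auto
    also have "\<dots> = norm ((of_real (real j + 1) :: complex) powr (-(s - 1)))"
    proof -
      have pos: "real j + 1 > 0" by simp
      show ?thesis
        by (simp only: of_real_powr_minus_diff_one[OF pos] norm_mult norm_of_real abs_of_pos[OF pos])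
          (simp add: add.commute)
    qed
    finally show ?thesis .
  qed
  then have "summable ?b"
    using assms by (intro summable_comparison_test[OF _ summable_norm_hurwitz_terms[of 1 "s - 1"]]) auto
  then have grouped: "(\<lambda>n. sum ?b {n * 2..<n * 2 + 2}) sums suminf ?b"
    by (intro sums_group summable_sums) auto
  have pair: "sum ?b {n * 2..<n * 2 + 2}
      = 2 powr (-s) * (of_real (real n + 1/2) powr (-(s - 1)) + 1/2 * of_real (real n + 1/2) powr (-s)
          - of_real (real n + 1) powr (-(s - 1)))" for n
  proof -
    have "sum ?b {n * 2..<n * 2 + 2} = ?b (2 * n) + ?b (Suc (2 * n))"
      by (simp add: numeral_2_eq_2 mult.commute)
    also have "\<dots> = of_nat (Suc n) * (of_nat (2 * n + 1) powr (-s) - of_nat (2 * n + 2) powr (-s))"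
    proof -
      have idx: "Suc (Suc (2 * n)) = 2 * Suc n" "2 * n + 1 = Suc (2 * n)" "2 * n + 2 = 2 * Suc n"
        by simp_all
      show ?thesis
        by (simp only: idx sum_alternating_of_nat_odd sum_alternating_of_nat_even mult_minus_left
            right_diff_distrib add_uminus_conv_diff)
    qed
    finally show ?thesis by (simp only: of_nat_mult_powr_difference_eq)
  qed
  have "(\<lambda>n. 2 powr (-s) * (of_real (real n + 1/2) powr (-(s - 1))
      + 1/2 * of_real (real n + 1/2) powr (-s) - of_real (real n + 1) powr (-(s - 1)))) sums ?rhs"
    unfolding riemann_zeta_def using assms
    by (intro sums_mult sums_diff sums_add hurwitz_zeta_sums) auto
  then have "suminf ?b = ?rhs"
    using grouped[unfolded pair] by (rule sums_unique2[rotated])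
  with \<open>summable ?b\<close> show ?thesis
    using summable_sums by fastforce
qed

lemma tendsto_alternating_sum_mult_hurwitz_zeta:
  assumes "Re s > 2"
  shows "(\<lambda>N. (\<Sum>i<N. (-1) ^ i * of_nat (Suc i)) * hurwitz_zeta (real (Suc N)) s) \<longlonglongrightarrow> 0"
proof (rule Lim_null_comparison)
  have "(\<lambda>N. of_nat (Suc N) * hurwitz_zeta (real (Suc N)) s) \<longlonglongrightarrow> 0"
    using tendsto_of_nat_mult_hurwitz_zeta[OF assms] by (rule filterlim_sequentially_Suc[THEN iffD2])
  then show "(\<lambda>N. norm (of_nat (Suc N) * hurwitz_zeta (real (Suc N)) s)) \<longlonglongrightarrow> 0"
    by (rule tendsto_norm_zero)
  show "\<forall>\<^sub>F N in sequentially. norm ((\<Sum>i<N. (-1) ^ i * of_nat (Suc i)) * hurwitz_zeta (real (Suc N)) s)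
      \<le> norm (of_nat (Suc N) * hurwitz_zeta (real (Suc N)) s)"
  proof (intro always_eventually allI)
    fix N
    have "norm (\<Sum>i<N. (-1) ^ i * of_nat (Suc i) :: complex) \<le> real N"
      by (rule norm_sum_alternating_of_nat_le)
    also have "\<dots> \<le> real (Suc N)" by simp
    finally have "norm (\<Sum>i<N. (-1) ^ i * of_nat (Suc i) :: complex) \<le> real (Suc N)" .
    then show "norm ((\<Sum>i<N. (-1) ^ i * of_nat (Suc i)) * hurwitz_zeta (real (Suc N)) s)
        \<le> norm (of_nat (Suc N) * hurwitz_zeta (real (Suc N)) s)"
      unfolding norm_mult norm_of_nat by (rule mult_right_mono) simp
  qed
qed

theorem mainTheorem8:
  fixes s :: complex
  assumes "Re s > 2"
  shows "(\<lambda>j::nat. let k = j + 1 in (-1) ^ (k - 1) * of_nat k * hurwitz_zeta (real k) s) sums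
           (2 powr (- s) * (hurwitz_zeta (1/2) (s - 1) + (1/2) * hurwitz_zeta (1/2) s
              - riemann_zeta (s - 1)))"
proof -
  have step: "hurwitz_zeta (real (Suc k)) s
      = of_nat (Suc k) powr (-s) + hurwitz_zeta (real (Suc (Suc k))) s" for k
    using hurwitz_zeta_shift[of "real (Suc k)" s] assms by simp
  have partial_sums: "(\<Sum>j<N. let k = j + 1 in (-1) ^ (k - 1) * of_nat k * hurwitz_zeta (real k) s)
      = (\<Sum>j<N. (\<Sum>i<Suc j. (-1) ^ i * of_nat (Suc i)) * of_nat (Suc j) powr (-s))
        + (\<Sum>i<N. (-1) ^ i * of_nat (Suc i)) * hurwitz_zeta (real (Suc N)) s" for N
    using summation_by_parts_tail[where g = "\<lambda>i. (-1) ^ i * of_nat (Suc i)"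
        and f = "\<lambda>k. of_nat (Suc k) powr (-s)" and T = "\<lambda>k. hurwitz_zeta (real (Suc k)) s", OF step]
    by (simp add: Let_def)
  show ?thesis
    unfolding sums_def partial_sums
    using tendsto_add[OF sums_alternating_weighted_powr[OF assms, unfolded sums_def]
        tendsto_alternating_sum_mult_hurwitz_zeta[OF assms]]
    by simp
qed

end
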